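(* Let $\mathcal{C}$ be a Fraïssé class of finite structures over a finite relational language, and let $M$ be its Fraïssé limit. Assume that every structure in $\mathcal{C}$ is rigid (has trivial automorphism group). Then at least one of the following holds: (a) $M$ has a reduct which is a total order, i.e. there is a strict total order on the domain of $M$ that is definable in $M$ by a first-order formula without parameters; (b) there are structures $A,B\in\mathcal{C}$ with $|A|=2$ which witness that $\mathcal{C}$ is not a Ramsey class, i.e. for every $C\in\mathcal{C}$ there is a colouring of the embeddings $A\to C$ with two colours such that no embedding $g:B\to C$ is monochromatic.
   Context: All structures are non-empty, and classes are closed under isomorphism and hereditary (closed under induced substructures). A Fraïssé class is such a class satisfying the joint embedding property (any two members embed in a common member) and the amalgamation property (for $A,B_1,B_2\in\mathcal{C}$ and embeddings $f_i:A\to B_i$ there exist $C\in\mathcal{C}$ and embeddings $g_i:B_i\to C$ with $g_1\circ f_1=g_2\circ f_2$). Its Fraïssé limit is the unique countable homogeneous structure whose age (class of finite structures embeddable in it) is $\mathcal{C}$; homogeneous means every isomorphism between finite substructures extends to an automorphism. An embedding $g:B\to C$ is monochromatic for a colouring of the embeddings $A\to C$ if all embeddings $A\to C$ whose image is contained in the image of $g$ receive the same colour. $\mathcal{C}$ is a Ramsey class if for all $A,B\in\mathcal{C}$ there is $C\in\mathcal{C}$ such that every $2$-colouring of the embeddings $A\to C$ admits a monochromatic embedding $B\to C$. *)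

theory Defs
  imports Main "HOL-Library.FuncSet" "HOL-Library.Countable_Set"
begin

record ('r, 'a) struc =
  sdom :: "'a set"
  srel :: "'r \<Rightarrow> 'a list \<Rightarrow> bool"

definition wf_struc :: "'r set \<Rightarrow> ('r \<Rightarrow> nat) \<Rightarrow> ('r, 'a) struc \<Rightarrow> bool" where
  "wf_struc L ar A \<longleftrightarrow> sdom A \<noteq> {} \<and>
     (\<forall>r xs. srel A r xs \<longrightarrow> r \<in> L \<and> length xs = ar r \<and> set xs \<subseteq> sdom A)"

definition finite_struc :: "'r set \<Rightarrow> ('r \<Rightarrow> nat) \<Rightarrow> ('r, 'a) struc \<Rightarrow> bool" where
  "finite_struc L ar A \<longleftrightarrow> wf_struc L ar A \<and> finite (sdom A)"

text \<open>Embeddings (as functions on the domain; arbitrary outside).\<close>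
definition is_emb :: "('a \<Rightarrow> 'b) \<Rightarrow> ('r, 'a) struc \<Rightarrow> ('r, 'b) struc \<Rightarrow> bool" where
  "is_emb f A B \<longleftrightarrow> f ` sdom A \<subseteq> sdom B \<and> inj_on f (sdom A) \<and>
     (\<forall>r. \<forall>xs. set xs \<subseteq> sdom A \<longrightarrow> (srel A r xs \<longleftrightarrow> srel B r (map f xs)))"

text \<open>The set of embeddings A \<rightarrow> B, each represented uniquely (extensional functions).\<close>
definition embs :: "('r, 'a) struc \<Rightarrow> ('r, 'b) struc \<Rightarrow> ('a \<Rightarrow> 'b) set" where
  "embs A B = {f. f \<in> extensional (sdom A) \<and> is_emb f A B}"

definition is_iso :: "('a \<Rightarrow> 'b) \<Rightarrow> ('r, 'a) struc \<Rightarrow> ('r, 'b) struc \<Rightarrow> bool" where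
  "is_iso f A B \<longleftrightarrow> is_emb f A B \<and> f ` sdom A = sdom B"

definition is_aut :: "('a \<Rightarrow> 'a) \<Rightarrow> ('r, 'a) struc \<Rightarrow> bool" where
  "is_aut f A \<longleftrightarrow> is_iso f A A"

definition rigid :: "('r, 'a) struc \<Rightarrow> bool" where
  "rigid A \<longleftrightarrow> (\<forall>f. is_aut f A \<longrightarrow> (\<forall>x\<in>sdom A. f x = x))"

definition restr :: "('r, 'a) struc \<Rightarrow> 'a set \<Rightarrow> ('r, 'a) struc" where
  "restr A S = \<lparr>sdom = S, srel = (\<lambda>r xs. srel A r xs \<and> set xs \<subseteq> S)\<rparr>"

text \<open>Classes of finite L-structures are represented by structures with domains in nat
(every finite structure has an isomorphic copy there).\<close>

definition fin_class :: "'r set \<Rightarrow> ('r \<Rightarrow> nat) \<Rightarrow> ('r, nat) struc set \<Rightarrow> bool" where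
  "fin_class L ar K \<longleftrightarrow> K \<noteq> {} \<and> (\<forall>A\<in>K. finite_struc L ar A) \<and>
     (\<forall>A\<in>K. \<forall>B f. finite_struc L ar B \<and> is_iso f A B \<longrightarrow> B \<in> K) \<and>
     (\<forall>A\<in>K. \<forall>S. S \<subseteq> sdom A \<and> S \<noteq> {} \<longrightarrow> restr A S \<in> K)"

definition JEP :: "('r, nat) struc set \<Rightarrow> bool" where
  "JEP K \<longleftrightarrow> (\<forall>A\<in>K. \<forall>B\<in>K. \<exists>C\<in>K. (\<exists>f. is_emb f A C) \<and> (\<exists>g. is_emb g B C))"

definition AP :: "('r, nat) struc set \<Rightarrow> bool" where
  "AP K \<longleftrightarrow> (\<forall>A\<in>K. \<forall>B1\<in>K. \<forall>B2\<in>K. \<forall>f1 f2. is_emb f1 A B1 \<and> is_emb f2 A B2 \<longrightarrow>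
      (\<exists>C\<in>K. \<exists>g1 g2. is_emb g1 B1 C \<and> is_emb g2 B2 C \<and>
         (\<forall>x\<in>sdom A. g1 (f1 x) = g2 (f2 x))))"

definition fraisse_class :: "'r set \<Rightarrow> ('r \<Rightarrow> nat) \<Rightarrow> ('r, nat) struc set \<Rightarrow> bool" where
  "fraisse_class L ar K \<longleftrightarrow> fin_class L ar K \<and> JEP K \<and> AP K"

definition homogeneous :: "('r, 'm) struc \<Rightarrow> bool" where
  "homogeneous M \<longleftrightarrow> (\<forall>S T h. S \<subseteq> sdom M \<and> T \<subseteq> sdom M \<and> finite S \<and>
      is_iso h (restr M S) (restr M T) \<longrightarrow>
      (\<exists>\<sigma>. is_aut \<sigma> M \<and> (\<forall>x\<in>S. \<sigma> x = h x)))"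

definition age_is :: "'r set \<Rightarrow> ('r \<Rightarrow> nat) \<Rightarrow> ('r, 'm) struc \<Rightarrow> ('r, nat) struc set \<Rightarrow> bool" where
  "age_is L ar M K \<longleftrightarrow> (\<forall>A. finite_struc L ar A \<longrightarrow> (A \<in> K \<longleftrightarrow> (\<exists>f. is_emb f A M)))"

definition fraisse_limit :: "'r set \<Rightarrow> ('r \<Rightarrow> nat) \<Rightarrow> ('r, nat) struc set \<Rightarrow> ('r, 'm) struc \<Rightarrow> bool" where
  "fraisse_limit L ar K M \<longleftrightarrow> wf_struc L ar M \<and> countable (sdom M) \<and> homogeneous M \<and> age_is L ar M K"

datatype 'r fm =
    FEq nat nat
  | FRel 'r "nat list"
  | FNeg "'r fm"
  | FConj "'r fm" "'r fm"
  | FEx nat "'r fm"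

fun sat :: "('r, 'a) struc \<Rightarrow> (nat \<Rightarrow> 'a) \<Rightarrow> 'r fm \<Rightarrow> bool" where
  "sat M e (FEq i j) = (e i = e j)"
| "sat M e (FRel r vs) = srel M r (map e vs)"
| "sat M e (FNeg \<phi>) = (\<not> sat M e \<phi>)"
| "sat M e (FConj \<phi> \<psi>) = (sat M e \<phi> \<and> sat M e \<psi>)"
| "sat M e (FEx x \<phi>) = (\<exists>a\<in>sdom M. sat M (e(x := a)) \<phi>)"

fun fv :: "'r fm \<Rightarrow> nat set" where
  "fv (FEq i j) = {i, j}"
| "fv (FRel r vs) = set vs"
| "fv (FNeg \<phi>) = fv \<phi>"
| "fv (FConj \<phi> \<psi>) = fv \<phi> \<union> fv \<psi>"
| "fv (FEx x \<phi>) = fv \<phi> - {x}"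

fun syms :: "'r fm \<Rightarrow> 'r set" where
  "syms (FEq i j) = {}"
| "syms (FRel r vs) = {r}"
| "syms (FNeg \<phi>) = syms \<phi>"
| "syms (FConj \<phi> \<psi>) = syms \<phi> \<union> syms \<psi>"
| "syms (FEx x \<phi>) = syms \<phi>"

definition strict_total_order_on :: "'a set \<Rightarrow> ('a \<Rightarrow> 'a \<Rightarrow> bool) \<Rightarrow> bool" where
  "strict_total_order_on D R \<longleftrightarrow>
     (\<forall>a\<in>D. \<not> R a a) \<and>
     (\<forall>a\<in>D. \<forall>b\<in>D. \<forall>c\<in>D. R a b \<and> R b c \<longrightarrow> R a c) \<and>
     (\<forall>a\<in>D. \<forall>b\<in>D. a \<noteq> b \<longrightarrow> R a b \<or> R b a)"

definition has_definable_total_order :: "'r set \<Rightarrow> ('r, 'm) struc \<Rightarrow> bool" where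
  "has_definable_total_order L M \<longleftrightarrow> (\<exists>\<phi>. fv \<phi> \<subseteq> {0, 1} \<and> syms \<phi> \<subseteq> L \<and>
     strict_total_order_on (sdom M) (\<lambda>a b. sat M (\<lambda>n. if n = 0 then a else b) \<phi>))"

definition monochromatic :: "('b \<Rightarrow> 'c) \<Rightarrow> ('r, 'a) struc \<Rightarrow> ('r, 'b) struc \<Rightarrow> ('r, 'c) struc
    \<Rightarrow> (('a \<Rightarrow> 'c) \<Rightarrow> bool) \<Rightarrow> bool" where
  "monochromatic g A B C \<chi> \<longleftrightarrow> (\<forall>f1\<in>embs A C. \<forall>f2\<in>embs A C.
      f1 ` sdom A \<subseteq> g ` sdom B \<and> f2 ` sdom A \<subseteq> g ` sdom B \<longrightarrow> \<chi> f1 = \<chi> f2)"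

definition not_ramsey_witness :: "('r, nat) struc set \<Rightarrow> ('r, nat) struc \<Rightarrow> ('r, nat) struc \<Rightarrow> bool" where
  "not_ramsey_witness K A B \<longleftrightarrow> (\<forall>C\<in>K. \<exists>\<chi> :: (nat \<Rightarrow> nat) \<Rightarrow> bool.
      \<forall>g. is_emb g B C \<longrightarrow> \<not> monochromatic g A B C \<chi>)"

end

theory Submission
  imports Defs
begin

text \<open>
  Since \<open>L\<close> is finite, the quantifier-free types of pairs of elements of \<open>M\<close> are finitely many,
  and for every set \<open>T\<close> of such types the relation "the type of \<open>(a, b)\<close> lies in \<open>T\<close>" is
  definable. If none of these relations is a strict total order of \<open>M\<close>, a finite set \<open>W\<close>
  witnesses this for all of them at once; let \<open>B \<in> K\<close> be a copy of \<open>W\<close>. If every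
  two-element \<open>A \<in> K\<close> had the Ramsey property, iterating it over the finitely many
  two-element substructures of \<open>B\<close> would give \<open>C \<in> K\<close> and an embedding \<open>h : B \<rightarrow> C\<close> along
  which, colouring an embedding of a pair by its orientation in \<open>C \<subseteq> \<nat>\<close>, the orientation of a
  pair depends only on its type. The types of the pairs that \<open>h\<close> orients upwards then order
  \<open>W\<close>, a contradiction.
\<close>

section \<open>Embeddings and the Ramsey arrow\<close>

lemma is_emb_id: "is_emb id A A"
  unfolding is_emb_def by simp

lemma is_emb_comp:
  assumes "is_emb g B C" "is_emb f A B"
  shows "is_emb (g \<circ> f) A C"
proof -
  have fA: "f ` sdom A \<subseteq> sdom B"
    using assms(2) unfolding is_emb_def by blast
  have "inj_on (g \<circ> f) (sdom A)"
    using assms fA unfolding is_emb_def by (metis comp_inj_on inj_on_subset)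
  moreover have "srel A r xs \<longleftrightarrow> srel C r (map (g \<circ> f) xs)" if "set xs \<subseteq> sdom A" for r xs
    using assms that fA unfolding is_emb_def by (metis map_map set_map image_mono order_trans)
  ultimately show ?thesis
    using assms fA unfolding is_emb_def by (auto simp: image_subset_iff)
qed

lemma is_emb_cong:
  assumes "is_emb f A B" "\<And>x. x \<in> sdom A \<Longrightarrow> f x = f' x"
  shows "is_emb f' A B"
proof -
  have "map f xs = map f' xs" if "set xs \<subseteq> sdom A" for xs
    using that assms(2) by (auto intro: map_cong)
  moreover have "f ` sdom A = f' ` sdom A"
    using assms(2) by (rule image_cong[OF refl])
  moreover have "inj_on f (sdom A) = inj_on f' (sdom A)"
    using assms(2) by (rule inj_on_cong)
  ultimately show ?thesis
    using assms(1) unfolding is_emb_def by metis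
qed

lemma restrict_in_embs: "is_emb f A B \<Longrightarrow> restrict f (sdom A) \<in> embs A B"
  unfolding embs_def by (auto intro: is_emb_cong)

lemma restrict_comp_restrict: "restrict (g \<circ> restrict f S) S = restrict (g \<circ> f) S"
  by (auto simp: restrict_def fun_eq_iff)

definition arrows :: "('r, 'c) struc \<Rightarrow> ('r, 'b) struc \<Rightarrow> ('r, 'a) struc \<Rightarrow> bool" where
  "arrows C B A \<longleftrightarrow> (\<forall>\<chi> :: ('a \<Rightarrow> 'c) \<Rightarrow> bool. \<exists>g. is_emb g B C \<and> monochromatic g A B C \<chi>)"

lemma not_ramsey_witness_iff: "not_ramsey_witness K A B \<longleftrightarrow> (\<forall>C\<in>K. \<not> arrows C B A)"
  unfolding not_ramsey_witness_def arrows_def by blast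

definition simultaneously_monochromatic ::
    "('b \<Rightarrow> 'c) \<Rightarrow> ('r, 'a) struc set \<Rightarrow> ('r, 'b) struc \<Rightarrow> (('r, 'a) struc \<Rightarrow> ('a \<Rightarrow> 'c) \<Rightarrow> bool) \<Rightarrow> bool" where
  "simultaneously_monochromatic h \<A> B \<chi> \<longleftrightarrow>
     (\<forall>A\<in>\<A>. \<forall>f1 f2. is_emb f1 A B \<longrightarrow> is_emb f2 A B \<longrightarrow>
        \<chi> A (restrict (h \<circ> f1) (sdom A)) = \<chi> A (restrict (h \<circ> f2) (sdom A)))"

lemma simultaneously_monochromatic_empty: "simultaneously_monochromatic h {} B \<chi>"
  unfolding simultaneously_monochromatic_def by simp

lemma simultaneously_monochromatic_insert:
  assumes g: "is_emb g C' C" and mono: "monochromatic g A C' C (\<chi> A)" and h: "is_emb h B C'"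
    and h_mono: "simultaneously_monochromatic h \<A> B (\<lambda>A' f. \<chi> A' (restrict (g \<circ> f) (sdom A')))"
  shows "simultaneously_monochromatic (g \<circ> h) (insert A \<A>) B \<chi>"
proof -
  have emb: "restrict (g \<circ> h \<circ> f) (sdom A) \<in> embs A C"
    and img: "restrict (g \<circ> h \<circ> f) (sdom A) ` sdom A \<subseteq> g ` sdom C'"
    if "is_emb f A B" for f
  proof -
    show "restrict (g \<circ> h \<circ> f) (sdom A) \<in> embs A C"
      using restrict_in_embs is_emb_comp[OF is_emb_comp[OF g h] that] .
    show "restrict (g \<circ> h \<circ> f) (sdom A) ` sdom A \<subseteq> g ` sdom C'"
      using h that unfolding is_emb_def by (auto intro!: imageI)
  qed
  show ?thesis
    unfolding simultaneously_monochromatic_def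
  proof (intro ballI allI impI)
    fix A' f1 f2
    assume A': "A' \<in> insert A \<A>" and f: "is_emb f1 A' B" "is_emb f2 A' B"
    show "\<chi> A' (restrict (g \<circ> h \<circ> f1) (sdom A')) = \<chi> A' (restrict (g \<circ> h \<circ> f2) (sdom A'))"
    proof (cases "A' = A")
      case True
      then show ?thesis
        using mono[unfolded monochromatic_def, rule_format, OF emb emb] img f by blast
    next
      case False
      then have "\<chi> A' (restrict (g \<circ> restrict (h \<circ> f1) (sdom A')) (sdom A')) =
          \<chi> A' (restrict (g \<circ> restrict (h \<circ> f2) (sdom A')) (sdom A'))"
        using A' h_mono f unfolding simultaneously_monochromatic_def by blast
      then show ?thesis
        by (simp only: restrict_comp_restrict comp_assoc)
    qed
  qed
qed

lemma arrows_simultaneously: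
  fixes \<A> K :: "('r, nat) struc set"
  assumes "finite \<A>" "\<forall>A\<in>\<A>. \<forall>B\<in>K. \<exists>C\<in>K. arrows C B A" "B \<in> K"
  shows "\<exists>C\<in>K. \<forall>\<chi>. \<exists>h. is_emb h B C \<and> simultaneously_monochromatic h \<A> B \<chi>"
  using assms(1,2)
proof (induction \<A> rule: finite_induct)
  case empty
  then show ?case
    using assms(3) is_emb_id simultaneously_monochromatic_empty by blast
next
  case (insert A \<A>)
  then obtain C' where "C' \<in> K" and IH: "\<forall>\<chi>. \<exists>h. is_emb h B C' \<and> simultaneously_monochromatic h \<A> B \<chi>"
    by blast
  then obtain C where "C \<in> K" and C: "arrows C C' A"
    using insert.prems by blast
  have "\<exists>h. is_emb h B C \<and> simultaneously_monochromatic h (insert A \<A>) B \<chi>" for \<chi>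
  proof -
    obtain g where g: "is_emb g C' C" and mono: "monochromatic g A C' C (\<chi> A)"
      using C unfolding arrows_def by blast
    obtain h where h: "is_emb h B C'"
      and h_mono: "simultaneously_monochromatic h \<A> B (\<lambda>A' f. \<chi> A' (restrict (g \<circ> f) (sdom A')))"
      using IH by blast
    show ?thesis
      using is_emb_comp[OF g h] simultaneously_monochromatic_insert[where \<chi> = \<chi>, OF g mono h h_mono]
      by blast
  qed
  then show ?case
    using \<open>C \<in> K\<close> by blast
qed

section \<open>Copies of finite substructures and quantifier-free types of pairs\<close>

text \<open>Written exactly like the assignment in \<open>has_definable_total_order\<close>, so that facts
  about it apply there verbatim.\<close>

abbreviation pair_env :: "'a \<Rightarrow> 'a \<Rightarrow> nat \<Rightarrow> 'a" where
  "pair_env a b \<equiv> \<lambda>n. if n = 0 then a else b"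

text \<open>The members of \<open>K\<close> live on initial segments of \<open>\<nat>\<close>; this is the copy, indexed by \<open>e\<close>,
  of the substructure of \<open>M\<close> on \<open>e ` {0..<n}\<close>.\<close>

definition pullback :: "('r, 'm) struc \<Rightarrow> (nat \<Rightarrow> 'm) \<Rightarrow> nat \<Rightarrow> ('r, nat) struc" where
  "pullback M e n = \<lparr>sdom = {0..<n}, srel = (\<lambda>r xs. set xs \<subseteq> {0..<n} \<and> srel M r (map e xs))\<rparr>"

lemma is_emb_pullback:
  assumes "inj_on e {0..<n}" "e ` {0..<n} \<subseteq> sdom M"
  shows "is_emb e (pullback M e n) M"
  using assms unfolding is_emb_def pullback_def by auto

lemma pullback_in_age:
  assumes "age_is L ar M K" "wf_struc L ar M" "0 < n" "inj_on e {0..<n}" "e ` {0..<n} \<subseteq> sdom M"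
  shows "pullback M e n \<in> K"
proof -
  have "finite_struc L ar (pullback M e n)"
    using assms(2,3) unfolding finite_struc_def wf_struc_def pullback_def by (auto, metis length_map)
  then show ?thesis
    using assms(1) is_emb_pullback[OF assms(4,5)] unfolding age_is_def by blast
qed

lemma pair_pullback_in_age:
  assumes "age_is L ar M K" "wf_struc L ar M" "a \<in> sdom M" "b \<in> sdom M" "a \<noteq> b"
  shows "pullback M (pair_env a b) 2 \<in> K" and "card (sdom (pullback M (pair_env a b) 2)) = 2"
proof -
  have "inj_on (pair_env a b) {0..<2}" "pair_env a b ` {0..<2} \<subseteq> sdom M"
    using assms(3-5) by (auto simp: inj_on_def)
  then show "pullback M (pair_env a b) 2 \<in> K"
    by (rule pullback_in_age[OF assms(1,2), of 2, simplified])
  show "card (sdom (pullback M (pair_env a b) 2)) = 2"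
    by (simp add: pullback_def)
qed

definition pair_atoms :: "'r set \<Rightarrow> ('r \<Rightarrow> nat) \<Rightarrow> ('r \<times> nat list) set" where
  "pair_atoms L ar = {(r, xs). r \<in> L \<and> length xs = ar r \<and> set xs \<subseteq> {0, 1}}"

lemma finite_pair_atoms:
  assumes "finite L"
  shows "finite (pair_atoms L ar)"
proof (rule finite_subset)
  show "pair_atoms L ar \<subseteq> (\<Union>r\<in>L. {r} \<times> {xs. set xs \<subseteq> {0, 1} \<and> length xs = ar r})"
    unfolding pair_atoms_def by auto
  show "finite (\<Union>r\<in>L. {r} \<times> {xs. set xs \<subseteq> {0::nat, 1} \<and> length xs = ar r})"
    using assms by (intro finite_UN_I) (auto intro: finite_lists_length_eq)
qed

definition qf_type :: "'r set \<Rightarrow> ('r \<Rightarrow> nat) \<Rightarrow> ('r, 'm) struc \<Rightarrow> 'm \<Rightarrow> 'm \<Rightarrow> bool \<times> ('r \<times> nat list) set" where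
  "qf_type L ar M a b = (a = b, {(r, xs) \<in> pair_atoms L ar. srel M r (map (pair_env a b) xs)})"

lemma finite_qf_types:
  assumes "finite L"
  shows "finite (range (case_prod (qf_type L ar M)))"
proof (rule finite_subset)
  show "range (case_prod (qf_type L ar M)) \<subseteq> UNIV \<times> Pow (pair_atoms L ar)"
    unfolding qf_type_def by auto
qed (use finite_pair_atoms[OF assms] in simp)

lemma qf_type_eqD:
  assumes "qf_type L ar M a b = qf_type L ar M c d"
  shows "a = b \<longleftrightarrow> c = d"
    and "(r, xs) \<in> pair_atoms L ar \<Longrightarrow> srel M r (map (pair_env a b) xs) = srel M r (map (pair_env c d) xs)"
  using assms unfolding qf_type_def by (auto simp: set_eq_iff)

lemma is_emb_pullback_pair:
  assumes "wf_struc L ar M" "i < n" "j < n" "i \<noteq> j"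
    and "qf_type L ar M a b = qf_type L ar M (e i) (e j)"
  shows "is_emb (pair_env i j) (pullback M (pair_env a b) 2) (pullback M e n)"
  unfolding is_emb_def
proof (intro conjI allI impI)
  show "pair_env i j ` sdom (pullback M (pair_env a b) 2) \<subseteq> sdom (pullback M e n)"
    and "inj_on (pair_env i j) (sdom (pullback M (pair_env a b) 2))"
    using assms(2-4) by (auto simp: pullback_def inj_on_def)
  fix r xs assume "set xs \<subseteq> sdom (pullback M (pair_env a b) 2)"
  then have xs: "set xs \<subseteq> {0, 1}"
    by (auto simp: pullback_def)
  then have "map e (map (pair_env i j) xs) = map (pair_env (e i) (e j)) xs" "set xs \<subseteq> {0..<2}"
    by auto
  moreover have "set (map (pair_env i j) xs) \<subseteq> {0..<n}"
    using xs assms(2,3) by auto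
  moreover have "srel M r (map (pair_env a b) xs) = srel M r (map (pair_env (e i) (e j)) xs)"
  proof (cases "(r, xs) \<in> pair_atoms L ar")
    case True
    then show ?thesis
      using qf_type_eqD(2)[OF assms(5)] by blast
  next
    case False
    have "\<not> srel M r ys" if "length ys = length xs" for ys
      using False xs assms(1) that unfolding wf_struc_def pair_atoms_def by auto
    then show ?thesis
      by simp
  qed
  ultimately show "srel (pullback M (pair_env a b) 2) r xs = srel (pullback M e n) r (map (pair_env i j) xs)"
    unfolding pullback_def by (simp del: map_map)
qed

section \<open>Definability of sets of types\<close>

fun conjs :: "'r fm list \<Rightarrow> 'r fm" where
  "conjs [] = FEq 0 0"
| "conjs (\<phi> # \<phi>s) = FConj \<phi> (conjs \<phi>s)"

fun disjs :: "'r fm list \<Rightarrow> 'r fm" where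
  "disjs [] = FNeg (FEq 0 0)"
| "disjs (\<phi> # \<phi>s) = FNeg (FConj (FNeg \<phi>) (FNeg (disjs \<phi>s)))"

definition lit :: "'r fm \<Rightarrow> bool \<Rightarrow> 'r fm" where
  "lit \<phi> b = (if b then \<phi> else FNeg \<phi>)"

lemma sat_lit [simp]: "sat M e (lit \<phi> b) \<longleftrightarrow> sat M e \<phi> = b"
  and fv_lit [simp]: "fv (lit \<phi> b) = fv \<phi>"
  and syms_lit [simp]: "syms (lit \<phi> b) = syms \<phi>"
  by (simp_all add: lit_def)

lemma sat_conjs [simp]: "sat M e (conjs \<phi>s) \<longleftrightarrow> (\<forall>\<phi>\<in>set \<phi>s. sat M e \<phi>)"
  and fv_conjs: "fv (conjs \<phi>s) \<subseteq> insert 0 (\<Union>(fv ` set \<phi>s))"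
  and syms_conjs [simp]: "syms (conjs \<phi>s) = \<Union>(syms ` set \<phi>s)"
  by (induction \<phi>s) auto

lemma sat_disjs [simp]: "sat M e (disjs \<phi>s) \<longleftrightarrow> (\<exists>\<phi>\<in>set \<phi>s. sat M e \<phi>)"
  and fv_disjs: "fv (disjs \<phi>s) \<subseteq> insert 0 (\<Union>(fv ` set \<phi>s))"
  and syms_disjs [simp]: "syms (disjs \<phi>s) = \<Union>(syms ` set \<phi>s)"
  by (induction \<phi>s) auto

definition qf_type_formula :: "('r \<times> nat list) list \<Rightarrow> bool \<times> ('r \<times> nat list) set \<Rightarrow> 'r fm" where
  "qf_type_formula atoms t =
     FConj (lit (FEq 0 1) (fst t)) (conjs (map (\<lambda>(r, xs). lit (FRel r xs) ((r, xs) \<in> snd t)) atoms))"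

lemma qf_type_formula_vocabulary:
  assumes "set atoms = pair_atoms L ar"
  shows "fv (qf_type_formula atoms t) \<subseteq> {0, 1}" and "syms (qf_type_formula atoms t) \<subseteq> L"
proof -
  let ?lits = "map (\<lambda>(r, xs). lit (FRel r xs) ((r, xs) \<in> snd t)) atoms"
  have "\<Union>(fv ` set ?lits) \<subseteq> {0, 1}"
    using assms unfolding pair_atoms_def by auto
  then have "fv (conjs ?lits) \<subseteq> {0, 1}"
    using fv_conjs[of ?lits] by blast
  then show "fv (qf_type_formula atoms t) \<subseteq> {0, 1}"
    unfolding qf_type_formula_def by simp
  show "syms (qf_type_formula atoms t) \<subseteq> L"
    using assms unfolding qf_type_formula_def pair_atoms_def by auto
qed

lemma sat_qf_type_formula:
  assumes "set atoms = pair_atoms L ar" "snd t \<subseteq> pair_atoms L ar"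
  shows "sat M (pair_env a b) (qf_type_formula atoms t) \<longleftrightarrow> qf_type L ar M a b = t"
proof -
  have "sat M (pair_env a b) (qf_type_formula atoms t) \<longleftrightarrow>
      (a = b) = fst t \<and> (\<forall>(r, xs)\<in>pair_atoms L ar. srel M r (map (pair_env a b) xs) \<longleftrightarrow> (r, xs) \<in> snd t)"
    using assms(1) unfolding qf_type_formula_def by auto
  also have "\<dots> \<longleftrightarrow> qf_type L ar M a b = t"
    using assms(2) unfolding qf_type_def by (cases t) auto
  finally show ?thesis .
qed

lemma qf_type_set_definable:
  assumes "finite L"
  shows "\<exists>\<phi>. fv \<phi> \<subseteq> {0, 1} \<and> syms \<phi> \<subseteq> L \<and>
           (\<forall>a b. sat M (pair_env a b) \<phi> \<longleftrightarrow> qf_type L ar M a b \<in> T)"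
proof -
  obtain atoms where atoms: "set atoms = pair_atoms L ar"
    using finite_list[OF finite_pair_atoms[OF assms, of ar]] by metis
  obtain ts where ts: "set ts = T \<inter> range (case_prod (qf_type L ar M))"
    using finite_list[OF finite_Int[OF disjI2, OF finite_qf_types[OF assms, of ar M]]] by metis
  have realised: "snd t \<subseteq> pair_atoms L ar" if "t \<in> set ts" for t
    using that ts unfolding qf_type_def by auto
  let ?\<phi> = "disjs (map (qf_type_formula atoms) ts)"
  have "\<Union>(fv ` set (map (qf_type_formula atoms) ts)) \<subseteq> {0, 1}"
    using qf_type_formula_vocabulary(1)[OF atoms] by auto
  then have "fv ?\<phi> \<subseteq> {0, 1}"
    using fv_disjs[of "map (qf_type_formula atoms) ts"] by blast
  moreover have "syms ?\<phi> \<subseteq> L"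
    using qf_type_formula_vocabulary(2)[OF atoms] by auto
  moreover have "sat M (pair_env a b) ?\<phi> \<longleftrightarrow> qf_type L ar M a b \<in> T" for a b
  proof -
    have "sat M (pair_env a b) ?\<phi> \<longleftrightarrow> (\<exists>t\<in>set ts. sat M (pair_env a b) (qf_type_formula atoms t))"
      by simp
    also have "\<dots> \<longleftrightarrow> (\<exists>t\<in>set ts. qf_type L ar M a b = t)"
      by (rule bex_cong[OF refl]) (rule sat_qf_type_formula[OF atoms realised])
    also have "\<dots> \<longleftrightarrow> qf_type L ar M a b \<in> T"
      unfolding ts by (auto intro: range_eqI[of _ _ "(a, b)"])
    finally show ?thesis .
  qed
  ultimately show ?thesis
    by blast
qed

section \<open>Orders from the Ramsey property\<close>

lemma strict_total_order_on_subset: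
  "strict_total_order_on D R \<Longrightarrow> F \<subseteq> D \<Longrightarrow> strict_total_order_on F R"
  unfolding strict_total_order_on_def by blast

lemma finite_witness_not_strict_total_order:
  assumes "\<not> strict_total_order_on D R"
  shows "\<exists>F\<subseteq>D. finite F \<and> \<not> strict_total_order_on F R"
proof -
  from assms obtain a b c where "a \<in> D" "b \<in> D" "c \<in> D" "\<not> strict_total_order_on {a, b, c} R"
    unfolding strict_total_order_on_def by blast
  then show ?thesis
    by (intro exI[of _ "{a, b, c}"]) auto
qed

lemma finite_witness_no_strict_total_order:
  assumes "finite \<R>" "D \<noteq> {}" "\<forall>R\<in>\<R>. \<not> strict_total_order_on D R"
  shows "\<exists>W\<subseteq>D. finite W \<and> W \<noteq> {} \<and> (\<forall>R\<in>\<R>. \<not> strict_total_order_on W R)"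
proof -
  obtain wit where wit: "\<forall>R\<in>\<R>. wit R \<subseteq> D \<and> finite (wit R) \<and> \<not> strict_total_order_on (wit R) R"
    using finite_witness_not_strict_total_order assms(3) by metis
  obtain d where "d \<in> D"
    using assms(2) by blast
  let ?W = "insert d (\<Union>(wit ` \<R>))"
  have "\<not> strict_total_order_on ?W R" if "R \<in> \<R>" for R
    using that wit strict_total_order_on_subset[of ?W R "wit R"] by blast
  then show ?thesis
    using wit assms(1) \<open>d \<in> D\<close> by (intro exI[of _ ?W]) auto
qed

definition type_determines_orientation :: "('i \<Rightarrow> 'o::ord) \<Rightarrow> 'i set \<Rightarrow> ('i \<Rightarrow> 'i \<Rightarrow> 't) \<Rightarrow> bool" where
  "type_determines_orientation h I \<tau> \<longleftrightarrow>
     (\<forall>i\<in>I. \<forall>j\<in>I. \<forall>i'\<in>I. \<forall>j'\<in>I. \<tau> i j = \<tau> i' j' \<longrightarrow> h i < h j \<longrightarrow> h i' < h j')"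

lemma strict_total_order_on_image_if_type_determines_orientation:
  fixes h :: "'i \<Rightarrow> 'o::linorder"
  assumes "inj_on h I" and "type_determines_orientation h I (\<lambda>i j. \<tau> (e i) (e j))"
  shows "\<exists>T. strict_total_order_on (e ` I) (\<lambda>a b. \<tau> a b \<in> T)"
proof
  let ?T = "{\<tau> (e i) (e j) | i j. i \<in> I \<and> j \<in> I \<and> h i < h j}"
  have oriented: "\<tau> (e i) (e j) \<in> ?T \<longleftrightarrow> h i < h j" if "i \<in> I" "j \<in> I" for i j
  proof
    assume "\<tau> (e i) (e j) \<in> ?T"
    then obtain i0 j0 where "i0 \<in> I" "j0 \<in> I" "\<tau> (e i0) (e j0) = \<tau> (e i) (e j)" "h i0 < h j0"
      by auto
    with that show "h i < h j"
      using assms(2) unfolding type_determines_orientation_def by blast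
  qed (use that in blast)
  show "strict_total_order_on (e ` I) (\<lambda>a b. \<tau> a b \<in> ?T)"
    unfolding strict_total_order_on_def
  proof (intro conjI ballI impI)
    fix a b c assume "a \<in> e ` I" "b \<in> e ` I" "c \<in> e ` I"
    then obtain i j k where "i \<in> I" "j \<in> I" "k \<in> I" "a = e i" "b = e j" "c = e k"
      by blast
    then show "\<not> \<tau> a a \<in> ?T" and "\<tau> a b \<in> ?T \<and> \<tau> b c \<in> ?T \<Longrightarrow> \<tau> a c \<in> ?T"
      using oriented by auto
    assume "a \<noteq> b"
    then have "h i \<noteq> h j"
      using assms(1) \<open>i \<in> I\<close> \<open>j \<in> I\<close> \<open>a = e i\<close> \<open>b = e j\<close> by (auto dest: inj_onD)
    then show "\<tau> a b \<in> ?T \<or> \<tau> b a \<in> ?T"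
      using oriented \<open>i \<in> I\<close> \<open>j \<in> I\<close> \<open>a = e i\<close> \<open>b = e j\<close> by (auto simp: neq_iff)
  qed
qed

lemma type_determines_orientation_if_monochromatic:
  fixes h :: "nat \<Rightarrow> 'o::order"
  assumes wf: "wf_struc L ar M" and e: "inj_on e {0..<n}"
    and pairs: "\<And>i j. i < n \<Longrightarrow> j < n \<Longrightarrow> i \<noteq> j \<Longrightarrow> pullback M (pair_env (e i) (e j)) 2 \<in> \<A>"
    and mono: "simultaneously_monochromatic h \<A> (pullback M e n) (\<lambda>_ f. f 0 < f 1)"
  shows "type_determines_orientation h {0..<n} (\<lambda>i j. qf_type L ar M (e i) (e j))"
  unfolding type_determines_orientation_def
proof (intro ballI impI)
  fix i j i' j'
  assume "i \<in> {0..<n}" "j \<in> {0..<n}" "i' \<in> {0..<n}" "j' \<in> {0..<n}" and "h i < h j"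
    and same: "qf_type L ar M (e i) (e j) = qf_type L ar M (e i') (e j')"
  then have ij: "i < n" "j < n" "i' < n" "j' < n" and "i \<noteq> j"
    by auto
  then have "i' \<noteq> j'"
    using qf_type_eqD(1)[OF same] e by (auto dest: inj_onD)
  define A where "A = pullback M (pair_env (e i) (e j)) 2"
  have "is_emb (pair_env i j) A (pullback M e n)" "is_emb (pair_env i' j') A (pullback M e n)"
    using is_emb_pullback_pair[OF wf] ij same \<open>i \<noteq> j\<close> \<open>i' \<noteq> j'\<close> unfolding A_def by auto
  moreover have "A \<in> \<A>"
    using pairs[OF ij(1,2) \<open>i \<noteq> j\<close>] unfolding A_def .
  ultimately have "(restrict (h \<circ> pair_env i j) (sdom A) 0 < restrict (h \<circ> pair_env i j) (sdom A) 1) =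
      (restrict (h \<circ> pair_env i' j') (sdom A) 0 < restrict (h \<circ> pair_env i' j') (sdom A) 1)"
    using mono unfolding simultaneously_monochromatic_def by blast
  moreover have "sdom A = {0..<2}"
    by (simp add: A_def pullback_def)
  ultimately show "h i' < h j'"
    using \<open>h i < h j\<close> by simp
qed

lemma exists_orientation_by_qf_type:
  fixes K :: "('r, nat) struc set" and M :: "('r, 'm) struc"
  assumes wf: "wf_struc L ar M" and age: "age_is L ar M K"
    and ramsey: "\<forall>A\<in>K. card (sdom A) = 2 \<longrightarrow> (\<forall>B\<in>K. \<exists>C\<in>K. arrows C B A)"
    and "0 < n" and e: "inj_on e {0..<n}" "e ` {0..<n} \<subseteq> sdom M"
  shows "\<exists>h :: nat \<Rightarrow> nat. inj_on h {0..<n} \<and>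
           type_determines_orientation h {0..<n} (\<lambda>i j. qf_type L ar M (e i) (e j))"
proof -
  define B where "B = pullback M e n"
  define \<A> where "\<A> = (\<lambda>(i, j). pullback M (pair_env (e i) (e j)) 2) ` {(i, j). i < n \<and> j < n \<and> i \<noteq> j}"
  have "B \<in> K"
    using pullback_in_age[OF age wf \<open>0 < n\<close> e] unfolding B_def .
  have pairs: "pullback M (pair_env (e i) (e j)) 2 \<in> \<A>" if "i < n" "j < n" "i \<noteq> j" for i j
    using that unfolding \<A>_def by auto
  have "A \<in> K \<and> card (sdom A) = 2" if "A \<in> \<A>" for A
  proof -
    from that obtain i j where ij: "i < n" "j < n" "i \<noteq> j" and A: "A = pullback M (pair_env (e i) (e j)) 2"
      unfolding \<A>_def by auto
    then have "e i \<in> sdom M" "e j \<in> sdom M" "e i \<noteq> e j"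
      using e by (auto dest: inj_onD)
    then show ?thesis
      unfolding A using pair_pullback_in_age[OF age wf] by blast
  qed
  then have \<A>_ramsey: "\<forall>A\<in>\<A>. \<forall>B\<in>K. \<exists>C\<in>K. arrows C B A"
    using ramsey by blast
  have "finite {(i, j). i < n \<and> j < n \<and> i \<noteq> j}"
    by (rule finite_subset[of _ "{0..<n} \<times> {0..<n}"]) auto
  then have "finite \<A>"
    unfolding \<A>_def by simp
  then obtain C :: "('r, nat) struc" where "\<forall>\<chi>. \<exists>h. is_emb h B C \<and> simultaneously_monochromatic h \<A> B \<chi>"
    using arrows_simultaneously[OF _ \<A>_ramsey \<open>B \<in> K\<close>] by blast
  \<comment> \<open>Colour an embedding of a pair by its orientation in the domain of \<open>C\<close>, a set of naturals.\<close>
  then obtain h where h: "is_emb h B C"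
    and mono: "simultaneously_monochromatic h \<A> B (\<lambda>_ f. f 0 < f 1)"
    by blast
  have "inj_on h {0..<n}"
    using h unfolding is_emb_def B_def pullback_def by simp
  moreover have "type_determines_orientation h {0..<n} (\<lambda>i j. qf_type L ar M (e i) (e j))"
    using type_determines_orientation_if_monochromatic[OF wf e(1) pairs mono[unfolded B_def]] .
  ultimately show ?thesis
    by blast
qed

lemma finite_subset_without_qf_type_order:
  assumes "finite L" "sdom M \<noteq> {}" "\<not> has_definable_total_order L M"
  shows "\<exists>W\<subseteq>sdom M. finite W \<and> W \<noteq> {} \<and>
           (\<forall>T. \<not> strict_total_order_on W (\<lambda>a b. qf_type L ar M a b \<in> T))"
proof -
  define R where "R T a b \<longleftrightarrow> qf_type L ar M a b \<in> T" for T a b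
  define \<T> where "\<T> = range (case_prod (qf_type L ar M))"
  have "\<not> strict_total_order_on (sdom M) (R T)" for T
  proof
    assume "strict_total_order_on (sdom M) (R T)"
    moreover obtain \<phi> where "fv \<phi> \<subseteq> {0, 1}" "syms \<phi> \<subseteq> L"
      and "\<forall>a b. sat M (pair_env a b) \<phi> \<longleftrightarrow> R T a b"
      using qf_type_set_definable[OF assms(1), of M ar T] unfolding R_def by blast
    moreover from this(3) have "(\<lambda>a b. sat M (pair_env a b) \<phi>) = R T"
      by (intro ext) simp
    ultimately have "has_definable_total_order L M"
      unfolding has_definable_total_order_def by (intro exI[of _ \<phi>]) simp
    with assms(3) show False ..
  qed
  moreover have "finite (R ` Pow \<T>)"
    using finite_qf_types[OF assms(1), of ar M] unfolding \<T>_def by simp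
  ultimately obtain W where W: "W \<subseteq> sdom M" "finite W" "W \<noteq> {}"
    and unordered: "\<forall>R'\<in>R ` Pow \<T>. \<not> strict_total_order_on W R'"
    using finite_witness_no_strict_total_order[of "R ` Pow \<T>" "sdom M"] assms(2) by blast
  \<comment> \<open>Types outside \<open>\<T>\<close> are never realised, so every \<open>R T\<close> occurs in \<open>R ` Pow \<T>\<close>.\<close>
  have "R T = R (T \<inter> \<T>)" for T
    by (auto simp: R_def \<T>_def fun_eq_iff)
  then have "\<not> strict_total_order_on W (R T)" for T
    using unordered by blast
  then show ?thesis
    using W unfolding R_def by blast
qed

lemma definable_total_order_if_pairs_ramsey:
  fixes K :: "('r, nat) struc set" and M :: "('r, 'm) struc"
  assumes "finite L" and wf: "wf_struc L ar M" and age: "age_is L ar M K"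
    and ramsey: "\<forall>A\<in>K. card (sdom A) = 2 \<longrightarrow> (\<forall>B\<in>K. \<exists>C\<in>K. arrows C B A)"
  shows "has_definable_total_order L M"
proof (rule ccontr)
  assume no_order: "\<not> has_definable_total_order L M"
  have "sdom M \<noteq> {}"
    using wf unfolding wf_struc_def by simp
  then obtain W where W: "W \<subseteq> sdom M" "finite W" "W \<noteq> {}"
    and unordered: "\<forall>T. \<not> strict_total_order_on W (\<lambda>a b. qf_type L ar M a b \<in> T)"
    using finite_subset_without_qf_type_order[OF \<open>finite L\<close> _ no_order, of ar] by blast
  obtain e :: "nat \<Rightarrow> 'm" and n where "bij_betw e {0..<n} W"
    using ex_bij_betw_nat_finite[OF \<open>finite W\<close>] by blast
  then have "0 < n" and e_inj: "inj_on e {0..<n}" and e_W: "e ` {0..<n} = W"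
    using W(3) unfolding bij_betw_def by auto
  then obtain h :: "nat \<Rightarrow> nat" where "inj_on h {0..<n}"
    and "type_determines_orientation h {0..<n} (\<lambda>i j. qf_type L ar M (e i) (e j))"
    using exists_orientation_by_qf_type[OF wf age ramsey \<open>0 < n\<close> e_inj] W(1) by blast
  then have "\<exists>T. strict_total_order_on (e ` {0..<n}) (\<lambda>a b. qf_type L ar M a b \<in> T)"
    by (rule strict_total_order_on_image_if_type_determines_orientation)
  with unordered show False
    unfolding e_W by blast
qed

theorem theorem1p5:
  fixes L :: "'r set" and ar :: "'r \<Rightarrow> nat"
    and K :: "('r, nat) struc set" and M :: "('r, 'm) struc"
  assumes "finite L"
    and "fraisse_class L ar K"
    and "fraisse_limit L ar K M"
    and "\<forall>A\<in>K. rigid A"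
  shows "has_definable_total_order L M \<or>
         (\<exists>A\<in>K. \<exists>B\<in>K. card (sdom A) = 2 \<and> not_ramsey_witness K A B)"
proof (rule disjCI)
  have wf: "wf_struc L ar M" and age: "age_is L ar M K"
    using assms(3) unfolding fraisse_limit_def by auto
  assume "\<not> (\<exists>A\<in>K. \<exists>B\<in>K. card (sdom A) = 2 \<and> not_ramsey_witness K A B)"
  then have "\<forall>A\<in>K. card (sdom A) = 2 \<longrightarrow> (\<forall>B\<in>K. \<exists>C\<in>K. arrows C B A)"
    unfolding not_ramsey_witness_iff by blast
  then show "has_definable_total_order L M"
    by (rule definable_total_order_if_pairs_ramsey[OF assms(1) wf age])
qed

end
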